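(* Let $G$ be a unimodular surface-like pseudolattice with point-like element $\mathsf p$ and Serre operator $S$, and let $f\in G$ be an element of rank zero with $\chi(f,f)=1$ (i.e. of self-intersection $-1$). Let $G_f={}^\perp f=\{v\in G\mid \chi(v,f)=0\}$ with the restricted pairing. Then $z:=(S-1)(f)$ lies in $\mathbb{Z}\mathsf p\subseteq G_f$, and the numerical blow-up $\operatorname{Bl}_z G_f=\mathbb{Z}g\oplus G_f$ is isometric to $G$ via the map sending $g\mapsto f$ and $v\mapsto v$ for $v\in G_f$.
   Context: A pseudolattice is a finitely generated free abelian group with a non-degenerate bilinear form $\chi$; unimodular means $\chi$ induces $G\cong\operatorname{Hom}(G,\mathbb{Z})$. Surface-like: there is a primitive $\mathsf p$ with $\chi(\mathsf p,\mathsf p)=0$, $\chi(\mathsf p,v)=\chi(v,\mathsf p)$ for all $v$, and $\chi$ symmetric on $\mathsf p^\perp$; rank $\mathsf r(v)=\chi(\mathsf p,v)$. A Serre operator is an isometry $S$ with $\chi(v,w)=\chi(w,S(v))$ for all $v,w$ (it exists and is unique for unimodular $G$). For $z\in\mathbb{Z}\mathsf p$, the numerical blow-up of a unimodular surface-like pseudolattice $H$ at $z$ is $\operatorname{Bl}_zH=\mathbb{Z}g\oplus H$ with pairing extending $\chi$ on $H$ by $\chi(g,g)=1$, $\chi(h,g)=0$ and $\chi(g,h)=\chi(z,h)$ for all $h\in H$. *)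

theory Defs
  imports Main "HOL-Library.Function_Algebras"
begin

text \<open>A finitely generated free abelian group is modelled as \<open>'n \<Rightarrow> int\<close>
  for a finite type \<open>'n\<close> (i.e. Z^n). Integer scalar multiplication:\<close>

definition zsc :: "int \<Rightarrow> ('n \<Rightarrow> int) \<Rightarrow> ('n \<Rightarrow> int)" where
  "zsc k v = (\<lambda>i. k * v i)"

definition additive_map :: "(('n::finite \<Rightarrow> int) \<Rightarrow> int) \<Rightarrow> bool" where
  "additive_map \<phi> \<longleftrightarrow> (\<forall>u v. \<phi> (u + v) = \<phi> u + \<phi> v)"

definition bilinear_form :: "(('n::finite \<Rightarrow> int) \<Rightarrow> ('n \<Rightarrow> int) \<Rightarrow> int) \<Rightarrow> bool" where
  "bilinear_form chi \<longleftrightarrow>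
     (\<forall>u v w. chi (u + v) w = chi u w + chi v w) \<and>
     (\<forall>u v w. chi u (v + w) = chi u v + chi u w)"

definition pseudolattice :: "(('n::finite \<Rightarrow> int) \<Rightarrow> ('n \<Rightarrow> int) \<Rightarrow> int) \<Rightarrow> bool" where
  "pseudolattice chi \<longleftrightarrow> bilinear_form chi \<and>
     (\<forall>v. (\<forall>w. chi v w = 0) \<longrightarrow> v = 0) \<and>
     (\<forall>w. (\<forall>v. chi v w = 0) \<longrightarrow> w = 0)"

definition unimodular :: "(('n::finite \<Rightarrow> int) \<Rightarrow> ('n \<Rightarrow> int) \<Rightarrow> int) \<Rightarrow> bool" where
  "unimodular chi \<longleftrightarrow> pseudolattice chi \<and>
     bij_betw (\<lambda>v. chi v) UNIV {\<phi>. additive_map \<phi>}"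

definition primitive :: "('n::finite \<Rightarrow> int) \<Rightarrow> bool" where
  "primitive p \<longleftrightarrow> p \<noteq> 0 \<and> (\<forall>k w. p = zsc k w \<longrightarrow> k = 1 \<or> k = -1)"

definition surface_like :: "(('n::finite \<Rightarrow> int) \<Rightarrow> ('n \<Rightarrow> int) \<Rightarrow> int) \<Rightarrow> ('n \<Rightarrow> int) \<Rightarrow> bool" where
  "surface_like chi p \<longleftrightarrow> pseudolattice chi \<and> primitive p \<and> chi p p = 0 \<and>
     (\<forall>v. chi p v = chi v p) \<and>
     (\<forall>v w. chi p v = 0 \<longrightarrow> chi p w = 0 \<longrightarrow> chi v w = chi w v)"

definition rk :: "(('n::finite \<Rightarrow> int) \<Rightarrow> ('n \<Rightarrow> int) \<Rightarrow> int) \<Rightarrow> ('n \<Rightarrow> int) \<Rightarrow> ('n \<Rightarrow> int) \<Rightarrow> int" where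
  "rk chi p v = chi p v"

definition isometry :: "(('n::finite \<Rightarrow> int) \<Rightarrow> ('n \<Rightarrow> int) \<Rightarrow> int) \<Rightarrow> (('n \<Rightarrow> int) \<Rightarrow> ('n \<Rightarrow> int)) \<Rightarrow> bool" where
  "isometry chi S \<longleftrightarrow> bij S \<and> (\<forall>u v. S (u + v) = S u + S v) \<and> (\<forall>v w. chi (S v) (S w) = chi v w)"

definition serre_operator :: "(('n::finite \<Rightarrow> int) \<Rightarrow> ('n \<Rightarrow> int) \<Rightarrow> int) \<Rightarrow> (('n \<Rightarrow> int) \<Rightarrow> ('n \<Rightarrow> int)) \<Rightarrow> bool" where
  "serre_operator chi S \<longleftrightarrow> isometry chi S \<and> (\<forall>v w. chi v w = chi w (S v))"

definition left_orth :: "(('n::finite \<Rightarrow> int) \<Rightarrow> ('n \<Rightarrow> int) \<Rightarrow> int) \<Rightarrow> ('n \<Rightarrow> int) \<Rightarrow> ('n \<Rightarrow> int) set" where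
  "left_orth chi f = {v. chi v f = 0}"

text \<open>Numerical blow-up Bl_z H = Z g \<oplus> H, elements written as pairs (a, h) = a g + h,
  with the bilinear extension of chi(g,g)=1, chi(h,g)=0, chi(g,h)=chi(z,h).\<close>
definition blowup_carrier :: "('n \<Rightarrow> int) set \<Rightarrow> (int \<times> ('n \<Rightarrow> int)) set" where
  "blowup_carrier H = UNIV \<times> H"

definition blowup_form ::
  "(('n::finite \<Rightarrow> int) \<Rightarrow> ('n \<Rightarrow> int) \<Rightarrow> int) \<Rightarrow> ('n \<Rightarrow> int) \<Rightarrow>
   int \<times> ('n \<Rightarrow> int) \<Rightarrow> int \<times> ('n \<Rightarrow> int) \<Rightarrow> int" where
  "blowup_form chi z x y = (case x of (a, h) \<Rightarrow> case y of (b, k) \<Rightarrow>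
      a * b * 1 + a * chi z k + b * 0 + chi h k)"

end

theory Submission
  imports Defs HOL.Modules
begin

text \<open>Write \<open>z = S f - f\<close>. The Serre property gives \<open>\<chi>(w, z) = \<chi>(f, w) - \<chi>(w, f)\<close>, which
  vanishes on rank-zero \<open>w\<close> because \<open>\<chi>\<close> is symmetric on \<open>p\<^sup>\<perp>\<close>. Primitivity and unimodularity
  provide \<open>e\<close> with \<open>\<chi>(p, e) = 1\<close>, so \<open>\<chi>(-, z)\<close> is a multiple of the rank \<open>\<chi>(p, -) = \<chi>(-, p)\<close>,
  and non-degeneracy forces \<open>z \<in> \<int>p\<close>. Since \<open>\<chi>(f, f) = 1\<close>, every \<open>u\<close> splits uniquely as
  \<open>\<chi>(u, f) f + (u - \<chi>(u, f) f)\<close> with the second summand in \<open>\<^sup>\<perp>f\<close>, and on \<open>\<^sup>\<perp>f\<close> we have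
  \<open>\<chi>(f, w) = \<chi>(w, z) = \<chi>(z, w)\<close>, which is exactly the pairing of \<open>g\<close> in the blow-up.\<close>

lemma additive_zsc:
  fixes g :: "('n \<Rightarrow> int) \<Rightarrow> int"
  assumes "additive g"
  shows "g (zsc k v) = k * g v"
proof (induction k rule: int_induct[where k = 0])
  case base
  have "zsc 0 v = 0" by (simp add: zsc_def fun_eq_iff)
  then show ?case using additive.zero[OF assms] by (metis mult_zero_left)
next
  case (step1 i)
  have "zsc (i + 1) v = zsc i v + v" by (simp add: zsc_def fun_eq_iff algebra_simps)
  then have "g (zsc (i + 1) v) = g (zsc i v) + g v" by (simp only: additive.add[OF assms])
  with step1 show ?case by (simp add: algebra_simps)
next
  case (step2 i)
  have "zsc (i - 1) v = zsc i v - v" by (simp add: zsc_def fun_eq_iff algebra_simps)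
  then have "g (zsc (i - 1) v) = g (zsc i v) - g v" by (simp only: additive.diff[OF assms])
  with step2 show ?case by (simp add: algebra_simps)
qed

lemma additive_map_iff_additive: "additive_map g \<longleftrightarrow> additive g"
  by (auto simp: additive_map_def additive_def)

lemma bilinear_form_additive:
  assumes "bilinear_form chi"
  shows bilinear_form_additive_left: "additive (\<lambda>u. chi u w)"
    and bilinear_form_additive_right: "additive (chi u)"
  using assms by (auto simp: bilinear_form_def additive_def)

lemma bilinear_form_simps:
  assumes "bilinear_form chi"
  shows "chi (u + v) w = chi u w + chi v w" "chi u (v + w) = chi u v + chi u w"
    and "chi (u - v) w = chi u w - chi v w" "chi u (v - w) = chi u v - chi u w"
    and "chi (zsc k u) w = k * chi u w" "chi u (zsc k w) = k * chi u w"
  by (rule additive.add[OF bilinear_form_additive_left[OF assms]]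
      additive.add[OF bilinear_form_additive_right[OF assms]]
      additive.diff[OF bilinear_form_additive_left[OF assms]]
      additive.diff[OF bilinear_form_additive_right[OF assms]]
      additive_zsc[OF bilinear_form_additive_left[OF assms]]
      additive_zsc[OF bilinear_form_additive_right[OF assms]])+

lemma pseudolattice_nondegenerate:
  assumes "pseudolattice chi"
  shows pseudolattice_left_nondegenerate: "(\<And>w. chi v w = 0) \<Longrightarrow> v = 0"
    and pseudolattice_right_nondegenerate: "(\<And>v. chi v w = 0) \<Longrightarrow> w = 0"
  using assms by (simp_all add: pseudolattice_def)

lemma additive_int_least_positive_value:
  fixes g :: "('n \<Rightarrow> int) \<Rightarrow> int"
  assumes g: "additive g" and "g w \<noteq> 0"
  shows "\<exists>e. g e > 0 \<and> (\<forall>v. g e dvd g v)"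
proof -
  have "\<exists>u. g u > 0"
    using \<open>g w \<noteq> 0\<close> additive.minus[OF g, of w] by (metis neg_0_less_iff_less linorder_neqE)
  then obtain e where e: "g e > 0" and least: "\<And>u. g u > 0 \<Longrightarrow> nat (g e) \<le> nat (g u)"
    using ex_has_least_nat[where P = "\<lambda>u. g u > 0" and m = "\<lambda>u. nat (g u)"] by metis
  have "g e dvd g v" for v
  proof -
    have rem: "g (v - zsc (g v div g e) e) = g v mod g e"
      using additive.diff[OF g] additive_zsc[OF g] by (simp add: minus_div_mult_eq_mod)
    have "g v mod g e < g e" "g v mod g e \<ge> 0"
      using e by simp_all
    then have "g v mod g e = 0"
      using least[of "v - zsc (g v div g e) e"] rem by fastforce
    then show ?thesis by (simp add: dvd_eq_mod_eq_0)
  qed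
  with e show ?thesis by blast
qed

lemma unimodular_primitive_ex_pairing_eq_1:
  assumes uni: "unimodular chi" and prim: "primitive p"
  shows "\<exists>e. chi p e = 1"
proof -
  have pl: "pseudolattice chi" and bil: "bilinear_form chi"
    using uni by (simp_all add: unimodular_def pseudolattice_def)
  have "\<exists>w. chi p w \<noteq> 0"
    using uni prim by (auto simp: unimodular_def pseudolattice_def primitive_def)
  then obtain e where d_pos: "chi p e > 0" and d_dvd: "\<And>v. chi p e dvd chi p v"
    using additive_int_least_positive_value[OF bilinear_form_additive_right[OF bil]] by blast
  define d where "d = chi p e"
  have "additive (\<lambda>w. chi p w div d)"
    using d_dvd bilinear_form_simps(2)[OF bil] unfolding additive_def d_def
    by (simp add: div_plus_div_distrib_dvd_left)
  then have "(\<lambda>w. chi p w div d) \<in> range chi"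
    using uni by (simp add: unimodular_def bij_betw_def additive_map_iff_additive)
  then obtain q where q: "chi q = (\<lambda>w. chi p w div d)"
    by (metis rangeE)
  have "chi (p - zsc d q) w = 0" for w
    using d_dvd q by (simp add: bilinear_form_simps[OF bil] d_def)
  then have "p - zsc d q = 0"
    by (rule pseudolattice_left_nondegenerate[OF pl])
  then have "p = zsc d q" by simp
  then have "d = 1 \<or> d = -1"
    using prim unfolding primitive_def by blast
  with d_pos show ?thesis
    unfolding d_def by auto
qed

lemma surface_like_orth_rank_zero_imp_point_multiple:
  assumes uni: "unimodular chi" and surf: "surface_like chi p"
    and orth: "\<And>u. chi p u = 0 \<Longrightarrow> chi u z = 0"
  shows "\<exists>k. z = zsc k p"
proof -
  have bil: "bilinear_form chi" and prim: "primitive p" and psym: "\<And>v. chi p v = chi v p"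
    using surf by (simp_all add: surface_like_def pseudolattice_def)
  obtain e where e: "chi p e = 1"
    using unimodular_primitive_ex_pairing_eq_1[OF uni prim] by blast
  define c where "c = chi e z"
  have "chi w (z - zsc c p) = 0" for w
  proof -
    have "chi p (w - zsc (chi p w) e) = 0"
      using e by (simp add: bilinear_form_simps[OF bil])
    then have "chi (w - zsc (chi p w) e) z = 0" by (rule orth)
    then have "chi w z = chi p w * c"
      by (simp add: bilinear_form_simps[OF bil] c_def)
    then show ?thesis
      by (simp add: bilinear_form_simps[OF bil] psym)
  qed
  then have "z - zsc c p = 0"
    using surf by (intro pseudolattice_right_nondegenerate[of chi]) (simp_all add: surface_like_def)
  then show ?thesis by auto
qed

lemma serre_operator_minus_id_pairing:
  assumes "serre_operator chi S" and "bilinear_form chi"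
  shows "chi w (S f - f) = chi f w - chi w f"
  using assms by (simp add: serre_operator_def bilinear_form_simps)

lemma serre_operator_minus_id_point_multiple:
  assumes uni: "unimodular chi" and surf: "surface_like chi p"
    and serre: "serre_operator chi S" and rank_zero: "chi p f = 0"
  shows "\<exists>k. S f - f = zsc k p"
proof (rule surface_like_orth_rank_zero_imp_point_multiple[OF uni surf])
  have bil: "bilinear_form chi"
    and sym: "\<And>v w. chi p v = 0 \<Longrightarrow> chi p w = 0 \<Longrightarrow> chi v w = chi w v"
    using surf by (simp_all add: surface_like_def pseudolattice_def)
  fix u
  assume "chi p u = 0"
  then have "chi f u = chi u f"
    using sym rank_zero by blast
  then show "chi u (S f - f) = 0"
    using serre_operator_minus_id_pairing[OF serre bil] by simp
qed

definition blowup_iso :: "('n \<Rightarrow> int) \<Rightarrow> int \<times> ('n \<Rightarrow> int) \<Rightarrow> 'n \<Rightarrow> int" where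
  "blowup_iso f = (\<lambda>(a, v). zsc a f + v)"

lemma blowup_iso_add:
  "blowup_iso f (fst x + fst y, snd x + snd y) = blowup_iso f x + blowup_iso f y"
  by (cases x; cases y) (simp add: blowup_iso_def zsc_def fun_eq_iff algebra_simps)

lemma bij_betw_blowup_iso:
  assumes bil: "bilinear_form chi" and ff: "chi f f = 1"
  shows "bij_betw (blowup_iso f) (blowup_carrier (left_orth chi f)) UNIV"
proof (rule bij_betwI')
  have coord: "chi (blowup_iso f x) f = fst x" if "x \<in> blowup_carrier (left_orth chi f)" for x
    using that ff by (cases x) (simp add: blowup_iso_def blowup_carrier_def left_orth_def
        bilinear_form_simps[OF bil])
  fix x y
  assume "x \<in> blowup_carrier (left_orth chi f)" "y \<in> blowup_carrier (left_orth chi f)"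
  then show "blowup_iso f x = blowup_iso f y \<longleftrightarrow> x = y"
    using coord[of x] coord[of y] by (cases x, cases y) (auto simp: blowup_iso_def)
next
  fix u
  have "chi (u - zsc (chi u f) f) f = 0"
    using ff by (simp add: bilinear_form_simps[OF bil])
  then show "\<exists>x\<in>blowup_carrier (left_orth chi f). u = blowup_iso f x"
    by (intro bexI[of _ "(chi u f, u - zsc (chi u f) f)"])
      (simp_all add: blowup_iso_def blowup_carrier_def left_orth_def)
qed simp

lemma blowup_iso_isometry:
  assumes bil: "bilinear_form chi" and ff: "chi f f = 1"
    and fz: "\<And>w. w \<in> left_orth chi f \<Longrightarrow> chi f w = chi z w"
    and x: "x \<in> blowup_carrier (left_orth chi f)" and y: "y \<in> blowup_carrier (left_orth chi f)"
  shows "chi (blowup_iso f x) (blowup_iso f y) = blowup_form chi z x y"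
proof -
  obtain a v b w where xy: "x = (a, v)" "y = (b, w)" by (cases x, cases y)
  have "v \<in> left_orth chi f" "w \<in> left_orth chi f"
    using x y by (simp_all add: xy blowup_carrier_def)
  then have "chi v f = 0" "chi f w = chi z w"
    using fz by (simp_all add: left_orth_def)
  then show ?thesis
    using ff by (simp add: xy blowup_iso_def blowup_form_def bilinear_form_simps[OF bil] algebra_simps)
qed

theorem mainTheorem4:
  fixes chi :: "('n::finite \<Rightarrow> int) \<Rightarrow> ('n \<Rightarrow> int) \<Rightarrow> int"
    and p f :: "'n \<Rightarrow> int"
    and S :: "('n \<Rightarrow> int) \<Rightarrow> ('n \<Rightarrow> int)"
  assumes "unimodular chi"
    and "surface_like chi p"
    and "serre_operator chi S"
    and "rk chi p f = 0"
    and "chi f f = 1"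
  shows "(\<exists>k. S f - f = zsc k p)
    \<and> (\<forall>k. zsc k p \<in> left_orth chi f)
    \<and> bij_betw (\<lambda>(a, v). zsc a f + v) (blowup_carrier (left_orth chi f)) UNIV
    \<and> (\<forall>x\<in>blowup_carrier (left_orth chi f). \<forall>y\<in>blowup_carrier (left_orth chi f).
          (\<lambda>(a, v). zsc a f + v) (fst x + fst y, snd x + snd y)
            = (\<lambda>(a, v). zsc a f + v) x + (\<lambda>(a, v). zsc a f + v) y)
    \<and> (\<forall>x\<in>blowup_carrier (left_orth chi f). \<forall>y\<in>blowup_carrier (left_orth chi f).
          chi ((\<lambda>(a, v). zsc a f + v) x) ((\<lambda>(a, v). zsc a f + v) y)
            = blowup_form chi (S f - f) x y)"
proof -
  have bil: "bilinear_form chi" and psym: "\<And>v. chi p v = chi v p"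
    using assms(2) by (simp_all add: surface_like_def pseudolattice_def)
  have rank_zero: "chi p f = 0"
    using assms(4) by (simp add: rk_def)
  obtain k where k: "S f - f = zsc k p"
    using serre_operator_minus_id_point_multiple[OF assms(1-3) rank_zero] by blast
  have fz: "chi f w = chi (S f - f) w" if "w \<in> left_orth chi f" for w
  proof -
    have "chi f w = chi w (S f - f)"
      using that serre_operator_minus_id_pairing[OF assms(3) bil] by (simp add: left_orth_def)
    also have "\<dots> = chi (S f - f) w"
      using psym[of w] by (simp add: k bilinear_form_simps[OF bil])
    finally show ?thesis .
  qed
  have "zsc j p \<in> left_orth chi f" for j
    using rank_zero by (simp add: left_orth_def bilinear_form_simps[OF bil])
  then show ?thesis
    using k bij_betw_blowup_iso[OF bil assms(5)] blowup_iso_add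
      blowup_iso_isometry[OF bil assms(5) fz]
    unfolding blowup_iso_def by blast
qed

end
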